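(* Let $c$ be an even integer greater than one and $\Gamma=\langle 2,c+1\rangle$ (the numerical semigroup generated by $2$ and $c+1$). For $m\in\Gamma$, \[ \delta^2_\Gamma(m)=\begin{cases}3 & \text{if } m=2,\\ 4 & \text{if } 2<m\le c+1.\end{cases} \]
   Context: For a numerical semigroup $\Gamma$: $D_\Gamma(x)=\{s\in\Gamma:x-s\in\Gamma\}$ and $\delta^2_\Gamma(m)=\min\{|D_\Gamma(m_1)\cup D_\Gamma(m_2)|: m\le m_1<m_2,\ m_1,m_2\in\Gamma\}$. *)

theory Defs
  imports Main
begin

definition semigroup2 :: "nat \<Rightarrow> nat \<Rightarrow> nat set" where
  "semigroup2 a b = {a * i + b * j | i j. True}"

text \<open>D_S(x) = {s in S. x - s in S} (with x - s taken in the integers, so s \<le> x).\<close>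
definition Dset :: "nat set \<Rightarrow> nat \<Rightarrow> nat set" where
  "Dset S x = {s \<in> S. s \<le> x \<and> x - s \<in> S}"

definition delta2 :: "nat set \<Rightarrow> nat \<Rightarrow> nat" where
  "delta2 S m = Inf {card (Dset S m1 \<union> Dset S m2) | m1 m2.
      m \<le> m1 \<and> m1 < m2 \<and> m1 \<in> S \<and> m2 \<in> S}"

end

theory Submission
  imports Defs
begin

text \<open>For odd b the semigroup \<langle>2, b\<rangle> consists of the even numbers together with everything
  from b on. Every D-set contains 0 and its argument, and once m1 > 2 also 2 lies in
  D(m1) \<union> D(m2): either one of them is even, or both are odd and m2 - 2 \<ge> m1 \<ge> b.
  This gives the lower bounds 3 and 4, which are attained by the pairs (2, 4) and (b, b + 2),
  whose D-sets together are {0, 2, 4} and {0, 2, b, b + 2}.\<close>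

lemma semigroup2_two_odd_iff:
  assumes "odd b"
  shows "x \<in> semigroup2 2 b \<longleftrightarrow> even x \<or> b \<le> x"
proof
  assume "x \<in> semigroup2 2 b"
  then obtain i j where x: "x = 2 * i + b * j"
    unfolding semigroup2_def by auto
  show "even x \<or> b \<le> x"
  proof (cases j)
    case 0
    then show ?thesis using x by auto
  next
    case (Suc k)
    then have "b \<le> b * j" by simp
    then show ?thesis using x by linarith
  qed
next
  assume "even x \<or> b \<le> x"
  then consider "even x" | "odd x" "b \<le> x" by blast
  then show "x \<in> semigroup2 2 b"
  proof cases
    case 1
    then have "x = 2 * (x div 2) + b * 0" by simp
    then show ?thesis unfolding semigroup2_def by blast
  next
    case 2
    with assms have "x = 2 * ((x - b) div 2) + b * 1" by simp
    then show ?thesis unfolding semigroup2_def by blast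
  qed
qed

lemma zero_in_semigroup2: "0 \<in> semigroup2 a b"
  unfolding semigroup2_def by force

lemma finite_Dset: "finite (Dset S x)"
  by (rule finite_subset[of _ "{0..x}"]) (auto simp: Dset_def)

lemma zero_self_in_Dset: "0 \<in> S \<Longrightarrow> x \<in> S \<Longrightarrow> {0, x} \<subseteq> Dset S x"
  by (auto simp: Dset_def)

lemma delta2_eqI:
  assumes "m \<le> m1" "m1 < m2" "m1 \<in> S" "m2 \<in> S"
    and "card (Dset S m1 \<union> Dset S m2) = k"
    and "\<And>m1 m2. m \<le> m1 \<Longrightarrow> m1 < m2 \<Longrightarrow> m1 \<in> S \<Longrightarrow> m2 \<in> S \<Longrightarrow>
           k \<le> card (Dset S m1 \<union> Dset S m2)"
  shows "delta2 S m = k"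
  unfolding delta2_def
proof (rule cInf_eq_minimum)
  show "k \<in> {card (Dset S m1 \<union> Dset S m2) | m1 m2. m \<le> m1 \<and> m1 < m2 \<and> m1 \<in> S \<and> m2 \<in> S}"
    using assms(1-5) by blast
qed (use assms(6) in blast)

lemma card_Dset_union_ge_3:
  assumes "0 \<in> S" "m1 \<in> S" "m2 \<in> S" "0 < m1" "m1 < m2"
  shows "3 \<le> card (Dset S m1 \<union> Dset S m2)"
proof -
  have "{0, m1, m2} \<subseteq> Dset S m1 \<union> Dset S m2"
    using zero_self_in_Dset[OF assms(1,2)] zero_self_in_Dset[OF assms(1,3)] by auto
  then have "card {0, m1, m2} \<le> card (Dset S m1 \<union> Dset S m2)"
    by (intro card_mono) (auto simp: finite_Dset)
  moreover have "card {0, m1, m2} = 3" using assms(4,5) by auto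
  ultimately show ?thesis by simp
qed

lemma two_in_Dset_union:
  assumes "odd b" and S: "S = semigroup2 2 b"
    and "m1 \<in> S" "m2 \<in> S" "2 < m1" "m1 < m2"
  shows "2 \<in> Dset S m1 \<union> Dset S m2"
proof -
  note mem = semigroup2_two_odd_iff[OF \<open>odd b\<close>, folded S]
  consider "even m1" | "even m2" | "odd m1" "odd m2" by blast
  then show ?thesis
  proof cases
    case 1
    then show ?thesis using assms(5) by (auto simp: Dset_def mem)
  next
    case 2
    then show ?thesis using assms(5,6) by (auto simp: Dset_def mem)
  next
    case 3
    then have "b \<le> m1" "m1 + 2 \<le> m2"
      using assms(3,6) mem by (auto, presburger)
    with 3 have "2 \<in> Dset S m2" by (auto simp: Dset_def mem)
    then show ?thesis by blast
  qed
qed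

lemma card_Dset_union_ge_4:
  assumes "odd b" and S: "S = semigroup2 2 b"
    and "m1 \<in> S" "m2 \<in> S" "2 < m1" "m1 < m2"
  shows "4 \<le> card (Dset S m1 \<union> Dset S m2)"
proof -
  have "0 \<in> S" using S zero_in_semigroup2 by simp
  then have "{0, 2, m1, m2} \<subseteq> Dset S m1 \<union> Dset S m2"
    using zero_self_in_Dset[of S m1] zero_self_in_Dset[of S m2] assms(3,4)
      two_in_Dset_union[OF assms] by auto
  then have "card {0, 2, m1, m2} \<le> card (Dset S m1 \<union> Dset S m2)"
    by (intro card_mono) (auto simp: finite_Dset)
  moreover have "card {0, 2, m1, m2} = 4" using assms(5,6) by auto
  ultimately show ?thesis by simp
qed

lemma Dset_union_2_4:
  assumes "odd b" "1 < b"
  shows "Dset (semigroup2 2 b) 2 \<union> Dset (semigroup2 2 b) 4 = {0, 2, 4}"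
proof -
  have "s \<in> {0, 2, 4}" if "s \<le> 4" "even s \<or> b \<le> s" "even (4 - s) \<or> b \<le> 4 - s" for s
    using that assms by (cases "s = 0 \<or> s = 1 \<or> s = 2 \<or> s = 3 \<or> s = 4") auto
  moreover have "s \<in> {0, 2}" if "s \<le> 2" "even s \<or> b \<le> s" "even (2 - s) \<or> b \<le> 2 - s" for s
    using that assms by (cases "s = 0 \<or> s = 1 \<or> s = 2") auto
  ultimately show ?thesis
    by (auto simp: Dset_def semigroup2_two_odd_iff[OF \<open>odd b\<close>])
qed

lemma Dset_union_b_b_plus_2:
  assumes "odd b" "1 < b"
  shows "Dset (semigroup2 2 b) b \<union> Dset (semigroup2 2 b) (b + 2) = {0, 2, b, b + 2}"
proof -
  have "s \<in> {0, 2, b, b + 2}"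
    if "s \<le> b + 2" "even s \<or> b \<le> s" "even (b + 2 - s) \<or> b \<le> b + 2 - s" for s
    using that assms by auto presburger
  moreover have "s \<in> {0, b}" if "s \<le> b" "even s \<or> b \<le> s" "even (b - s) \<or> b \<le> b - s" for s
    using that assms by auto
  ultimately show ?thesis
    using assms by (auto simp: Dset_def semigroup2_two_odd_iff[OF \<open>odd b\<close>])
qed

theorem lemma4p6:
  fixes c m :: nat
  assumes "even c" and "c > 1" and "m \<in> semigroup2 2 (c + 1)"
  shows "(m = 2 \<longrightarrow> delta2 (semigroup2 2 (c + 1)) m = 3)
       \<and> (2 < m \<and> m \<le> c + 1 \<longrightarrow> delta2 (semigroup2 2 (c + 1)) m = 4)"
proof -
  define b where "b = c + 1"
  define S where "S = semigroup2 2 b"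
  have b: "odd b" "2 < b" using assms(1,2) by (auto simp: b_def)
  note mem = semigroup2_two_odd_iff[OF \<open>odd b\<close>, folded S_def]
  have "delta2 S 2 = 3"
  proof (rule delta2_eqI[of 2 2 4])
    show "card (Dset S 2 \<union> Dset S 4) = 3"
      using Dset_union_2_4[of b] b by (simp add: S_def)
  qed (use card_Dset_union_ge_3 zero_in_semigroup2 in \<open>auto simp: mem\<close>)
  moreover have "delta2 S m = 4" if "2 < m" "m \<le> b"
  proof (rule delta2_eqI[of m b "b + 2"])
    show "card (Dset S b \<union> Dset S (b + 2)) = 4"
      using Dset_union_b_b_plus_2[of b] b by (simp add: S_def)
  qed (use that card_Dset_union_ge_4[OF \<open>odd b\<close> S_def] in \<open>auto simp: mem\<close>)
  ultimately show ?thesis by (simp add: S_def b_def)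
qed

end
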